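(* Let $S$ be a finite poset with acyclic Hasse graph $\Gamma(S)$, and let $s_t$ be a terminal point of $S$ which is a Dynkin point of $S$. Then for every poset $\overrightarrow S$ on the same set with $\Gamma(\overrightarrow S)=\Gamma(S)$, the point $s_t$ is a Dynkin point of $\overrightarrow S$.
   Context: For $S=\{s_1,\dots,s_n\}$, $f_S(x)=\sum_i x_i^2+\sum_{s_i<s_j}x_ix_j$, so $\frac{\partial f_S}{\partial x_m}(x)=2x_m+\sum_{j\ne m,\ s_j\text{ comparable with }s_m}x_j$. $\Gamma(S)$ has vertex set $S$ and an edge between $s,s'$ when one covers the other. A terminal point is a vertex of degree $\le1$ in $\Gamma(S)$. $s_m$ is a Dynkin point of $S$ if there is a nonzero $d\in\mathbb Z^n$ with $0\le\frac{\partial f_S}{\partial x_m}(d)\le2$ and $\frac{\partial f_S}{\partial x_j}(d)=0$ for $j\ne m$. *)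

theory Defs
  imports Main
begin

definition poset_on :: "'a set \<Rightarrow> ('a \<Rightarrow> 'a \<Rightarrow> bool) \<Rightarrow> bool" where
  "poset_on V le \<longleftrightarrow>
     (\<forall>x\<in>V. le x x) \<and>
     (\<forall>x\<in>V. \<forall>y\<in>V. le x y \<and> le y x \<longrightarrow> x = y) \<and>
     (\<forall>x\<in>V. \<forall>y\<in>V. \<forall>z\<in>V. le x y \<and> le y z \<longrightarrow> le x z)"

definition less_in :: "('a \<Rightarrow> 'a \<Rightarrow> bool) \<Rightarrow> 'a \<Rightarrow> 'a \<Rightarrow> bool" where
  "less_in le x y \<longleftrightarrow> le x y \<and> x \<noteq> y"

definition covers :: "'a set \<Rightarrow> ('a \<Rightarrow> 'a \<Rightarrow> bool) \<Rightarrow> 'a \<Rightarrow> 'a \<Rightarrow> bool" where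
  "covers V le x y \<longleftrightarrow> x \<in> V \<and> y \<in> V \<and> less_in le x y \<and>
     \<not> (\<exists>z\<in>V. less_in le x z \<and> less_in le z y)"

definition hasse_edge :: "'a set \<Rightarrow> ('a \<Rightarrow> 'a \<Rightarrow> bool) \<Rightarrow> 'a \<Rightarrow> 'a \<Rightarrow> bool" where
  "hasse_edge V le x y \<longleftrightarrow> covers V le x y \<or> covers V le y x"

definition hasse_acyclic :: "'a set \<Rightarrow> ('a \<Rightarrow> 'a \<Rightarrow> bool) \<Rightarrow> bool" where
  "hasse_acyclic V le \<longleftrightarrow>
     \<not> (\<exists>cs. length cs \<ge> 3 \<and> distinct cs \<and> set cs \<subseteq> V \<and>
            (\<forall>i. Suc i < length cs \<longrightarrow> hasse_edge V le (cs ! i) (cs ! Suc i)) \<and>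
            hasse_edge V le (last cs) (hd cs))"

definition hasse_degree :: "'a set \<Rightarrow> ('a \<Rightarrow> 'a \<Rightarrow> bool) \<Rightarrow> 'a \<Rightarrow> nat" where
  "hasse_degree V le s = card {s' \<in> V. hasse_edge V le s s'}"

definition terminal_point :: "'a set \<Rightarrow> ('a \<Rightarrow> 'a \<Rightarrow> bool) \<Rightarrow> 'a \<Rightarrow> bool" where
  "terminal_point V le s \<longleftrightarrow> s \<in> V \<and> hasse_degree V le s \<le> 1"

definition comparable_in :: "('a \<Rightarrow> 'a \<Rightarrow> bool) \<Rightarrow> 'a \<Rightarrow> 'a \<Rightarrow> bool" where
  "comparable_in le x y \<longleftrightarrow> le x y \<or> le y x"

text \<open>Partial derivative of f_S(x) = sum x_i^2 + sum_{s_i<s_j} x_i x_j with respect to x_m,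
  for x a vector indexed by the elements of V.\<close>
definition dfS :: "'a set \<Rightarrow> ('a \<Rightarrow> 'a \<Rightarrow> bool) \<Rightarrow> ('a \<Rightarrow> int) \<Rightarrow> 'a \<Rightarrow> int" where
  "dfS V le x m = 2 * x m + (\<Sum>j\<in>{j \<in> V. j \<noteq> m \<and> comparable_in le j m}. x j)"

definition dynkin_point :: "'a set \<Rightarrow> ('a \<Rightarrow> 'a \<Rightarrow> bool) \<Rightarrow> 'a \<Rightarrow> bool" where
  "dynkin_point V le m \<longleftrightarrow> m \<in> V \<and>
     (\<exists>d :: 'a \<Rightarrow> int. (\<forall>x. x \<notin> V \<longrightarrow> d x = 0) \<and> (\<exists>x\<in>V. d x \<noteq> 0) \<and>
        0 \<le> dfS V le d m \<and> dfS V le d m \<le> 2 \<and>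
        (\<forall>j\<in>V. j \<noteq> m \<longrightarrow> dfS V le d j = 0))"

end

theory Submission
  imports Defs "HOL-Library.Transitive_Closure_Table"
begin

text \<open>Reversing one edge \<open>u \<rightarrow> w\<close> of an acyclic orientation of a forest changes comparability
  only across the cut that separates \<open>u\<close> from \<open>w\<close>: if \<open>W\<close> is the side of \<open>w\<close>, the comparable
  pairs across the cut change from (below \<open>u\<close>) \<open>\<times>\<close> (above \<open>w\<close>) to (above \<open>u\<close>) \<open>\<times>\<close> (below \<open>w\<close>).
  The integral substitution \<open>d\<^sub>u := d\<^sub>u + \<Sum>\<^bsub>above w\<^esub> d\<close>,
  \<open>d\<^sub>w := d\<^sub>w - \<Sum>\<^bsub>above w\<^esub> d - \<Sum>\<^bsub>below w\<^esub> d\<close> is invertible and transports the gradient of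
  the old form to the gradient of the new one, up to terms on \<open>W\<close> that only involve the old
  gradient at \<open>u\<close> and \<open>w\<close>. A Dynkin witness has vanishing gradient away from \<open>t\<close>, so these
  terms vanish unless \<open>t \<in> {u, w}\<close>; if \<open>t = w\<close> is terminal then \<open>W = {w}\<close> and the gradient just
  changes sign, and \<open>t = u\<close> reduces to \<open>t = w\<close> by reversing all edges. Any two orientations of a
  forest are connected by such single flips.\<close>

section \<open>Reachability across a cut\<close>

lemma rtranclp_closed_iff_restrict:
  assumes closed: "\<forall>x y. r x y \<longrightarrow> x \<in> X \<longrightarrow> y \<in> X" and "a \<in> X"
  shows "r\<^sup>*\<^sup>* a b \<longleftrightarrow> b \<in> X \<and> (\<lambda>x y. r x y \<and> x \<in> X \<and> y \<in> X)\<^sup>*\<^sup>* a b"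
proof
  assume "r\<^sup>*\<^sup>* a b"
  then show "b \<in> X \<and> (\<lambda>x y. r x y \<and> x \<in> X \<and> y \<in> X)\<^sup>*\<^sup>* a b"
    by (induction rule: rtranclp_induct) (use assms in \<open>auto intro: rtranclp.rtrancl_into_rtrancl\<close>)
next
  assume "b \<in> X \<and> (\<lambda>x y. r x y \<and> x \<in> X \<and> y \<in> X)\<^sup>*\<^sup>* a b"
  then show "r\<^sup>*\<^sup>* a b"
    by (auto elim: mono_rtranclp[rule_format, rotated])
qed

lemma rtranclp_closed_iff_restrict_compl:
  assumes closed: "\<forall>x y. r x y \<longrightarrow> x \<in> X \<longrightarrow> y \<in> X" and "b \<notin> X"
  shows "r\<^sup>*\<^sup>* a b \<longleftrightarrow> a \<notin> X \<and> (\<lambda>x y. r x y \<and> x \<notin> X \<and> y \<notin> X)\<^sup>*\<^sup>* a b"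
proof
  assume "r\<^sup>*\<^sup>* a b"
  then show "a \<notin> X \<and> (\<lambda>x y. r x y \<and> x \<notin> X \<and> y \<notin> X)\<^sup>*\<^sup>* a b"
    by (induction rule: converse_rtranclp_induct)
      (use assms in \<open>auto intro: converse_rtranclp_into_rtranclp\<close>)
next
  assume "a \<notin> X \<and> (\<lambda>x y. r x y \<and> x \<notin> X \<and> y \<notin> X)\<^sup>*\<^sup>* a b"
  then show "r\<^sup>*\<^sup>* a b"
    by (auto elim: mono_rtranclp[rule_format, rotated])
qed

lemma rtranclp_through_single_entry:
  assumes entry: "\<forall>x y. r x y \<longrightarrow> x \<notin> X \<longrightarrow> y \<in> X \<longrightarrow> x = u \<and> y = w"
    and "r\<^sup>*\<^sup>* a b" "a \<notin> X" "b \<in> X"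
  shows "r\<^sup>*\<^sup>* a u \<and> r\<^sup>*\<^sup>* w b"
  using assms(2,4)
proof (induction rule: rtranclp_induct)
  case base
  then show ?case using \<open>a \<notin> X\<close> by simp
next
  case (step y z)
  show ?case
  proof (cases "y \<in> X")
    case True
    then show ?thesis using step by (meson rtranclp.rtrancl_into_rtrancl)
  next
    case False
    then show ?thesis using entry step by blast
  qed
qed

section \<open>Forests\<close>

definition graph_on :: "'a set \<Rightarrow> ('a \<Rightarrow> 'a \<Rightarrow> bool) \<Rightarrow> bool" where
  "graph_on V E \<longleftrightarrow> (\<forall>x y. E x y \<longrightarrow> x \<in> V \<and> y \<in> V \<and> x \<noteq> y)"

definition acyclic_graph :: "'a set \<Rightarrow> ('a \<Rightarrow> 'a \<Rightarrow> bool) \<Rightarrow> bool" where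
  "acyclic_graph V E \<longleftrightarrow>
     \<not> (\<exists>cs. length cs \<ge> 3 \<and> distinct cs \<and> set cs \<subseteq> V \<and>
            (\<forall>i. Suc i < length cs \<longrightarrow> E (cs ! i) (cs ! Suc i)) \<and> E (last cs) (hd cs))"

definition cut_component :: "('a \<Rightarrow> 'a \<Rightarrow> bool) \<Rightarrow> 'a \<Rightarrow> 'a \<Rightarrow> 'a set" where
  "cut_component E u w = {x. (\<lambda>a b. E a b \<and> {a, b} \<noteq> {u, w})\<^sup>*\<^sup>* w x}"

lemma start_in_cut_component [simp]: "w \<in> cut_component E u w"
  by (simp add: cut_component_def)

lemma cut_component_subset:
  assumes "graph_on V E" "w \<in> V"
  shows "cut_component E u w \<subseteq> V"
proof
  fix x
  assume "x \<in> cut_component E u w"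
  then have "(\<lambda>a b. E a b \<and> {a, b} \<noteq> {u, w})\<^sup>*\<^sup>* w x"
    by (simp add: cut_component_def)
  then show "x \<in> V"
    by (induction rule: rtranclp_induct) (use assms in \<open>auto simp: graph_on_def\<close>)
qed

lemma cut_component_leaving_edge:
  assumes "E x y" "x \<in> cut_component E u w" "y \<notin> cut_component E u w"
  shows "{x, y} = {u, w}"
  using assms by (auto simp: cut_component_def intro: rtranclp.rtrancl_into_rtrancl)

lemma notin_cut_component:
  assumes graph: "graph_on V E" and acyclic: "acyclic_graph V E" and "E u w"
  shows "u \<notin> cut_component E u w"
proof
  define E' where "E' = (\<lambda>a b. E a b \<and> {a, b} \<noteq> {u, w})"
  assume "u \<in> cut_component E u w"
  then obtain xs where "rtrancl_path E' w xs u"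
    by (auto simp: cut_component_def E'_def rtranclp_eq_rtrancl_path)
  then obtain ys where path: "rtrancl_path E' w ys u" and distinct: "distinct (w # ys)"
    by (rule rtrancl_path_distinct)
  have uw: "u \<noteq> w" and "w \<in> V" using graph \<open>E u w\<close> by (auto simp: graph_on_def)
  have "ys \<noteq> []" using path uw by (auto elim: rtrancl_path.cases)
  then have last: "last (w # ys) = u" using rtrancl_path_last[OF path] by simp
  have steps: "E ((w # ys) ! i) ((w # ys) ! Suc i)" if "Suc i < length (w # ys)" for i
    using rtrancl_path_nth[OF path, of i] that by (simp add: E'_def)
  have "set ys \<subseteq> V"
    using rtrancl_path_Range[OF path] graph by (auto simp: E'_def graph_on_def)
  moreover have "length ys \<ge> 2"
  proof (rule ccontr)
    assume "\<not> length ys \<ge> 2"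
    with \<open>ys \<noteq> []\<close> obtain z where "ys = [z]" by (cases ys) (auto simp: Suc_le_eq)
    with last have "ys = [u]" by simp
    then show False using rtrancl_path_nth[OF path, of 0] by (simp add: E'_def insert_commute)
  qed
  ultimately have "length (w # ys) \<ge> 3" "set (w # ys) \<subseteq> V" "E (last (w # ys)) (hd (w # ys))"
    using last \<open>E u w\<close> \<open>w \<in> V\<close> by auto
  then show False
    using acyclic distinct steps unfolding acyclic_graph_def by blast
qed

lemma cut_component_of_leaf:
  assumes "finite V" "graph_on V E" "E w u" and leaf: "card {s \<in> V. E w s} \<le> 1"
  shows "cut_component E u w = {w}"
proof -
  have neighbour: "y = u" if "E w y" for y
  proof -
    have "{u, y} \<subseteq> {s \<in> V. E w s}"
      using that assms(2,3) by (auto simp: graph_on_def)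
    then have "card {u, y} \<le> 1"
      using leaf card_mono[OF _ \<open>{u, y} \<subseteq> _\<close>] assms(1) by fastforce
    then show "y = u" by (cases "u = y") auto
  qed
  have "x = w" if "(\<lambda>a b. E a b \<and> {a, b} \<noteq> {u, w})\<^sup>*\<^sup>* w x" for x
    using that by (cases rule: converse_rtranclpE) (use neighbour in auto)
  then show ?thesis by (auto simp: cut_component_def)
qed

section \<open>Orientations and comparability forms\<close>

definition acyclic_orientation :: "('a \<Rightarrow> 'a \<Rightarrow> bool) \<Rightarrow> ('a \<Rightarrow> 'a \<Rightarrow> bool) \<Rightarrow> bool" where
  "acyclic_orientation E r \<longleftrightarrow>
     (\<forall>x y. E x y \<longleftrightarrow> r x y \<or> r y x) \<and> (\<forall>x y. r\<^sup>*\<^sup>* x y \<longrightarrow> r\<^sup>*\<^sup>* y x \<longrightarrow> x = y)"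

definition flip_edge :: "('a \<Rightarrow> 'a \<Rightarrow> bool) \<Rightarrow> 'a \<Rightarrow> 'a \<Rightarrow> 'a \<Rightarrow> 'a \<Rightarrow> bool" where
  "flip_edge r u w x y \<longleftrightarrow> (r x y \<and> (x, y) \<noteq> (u, w)) \<or> (x, y) = (w, u)"

definition comparable_by :: "('a \<Rightarrow> 'a \<Rightarrow> bool) \<Rightarrow> 'a \<Rightarrow> 'a \<Rightarrow> bool" where
  "comparable_by r x y \<longleftrightarrow> r\<^sup>*\<^sup>* x y \<or> r\<^sup>*\<^sup>* y x"

lemma acyclic_orientation_conversep:
  "acyclic_orientation E r \<Longrightarrow> acyclic_orientation E r\<inverse>\<inverse>"
  by (auto simp: acyclic_orientation_def rtranclp_conversep)

lemma comparable_by_conversep [simp]: "comparable_by r\<inverse>\<inverse> = comparable_by r"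
  by (auto simp: comparable_by_def rtranclp_conversep fun_eq_iff)

lemma flip_edge_conversep: "flip_edge r\<inverse>\<inverse> w u = (flip_edge r u w)\<inverse>\<inverse>"
  by (auto simp: flip_edge_def fun_eq_iff)

text \<open>\<open>gram C\<close> is the matrix of \<open>2 f\<^sub>S\<close> for a poset \<open>S\<close> with comparability relation \<open>C\<close>.\<close>
definition gram :: "('a \<Rightarrow> 'a \<Rightarrow> bool) \<Rightarrow> 'a \<Rightarrow> 'a \<Rightarrow> int" where
  "gram C i j = (if i = j then 2 else of_bool (C i j))"

definition form_grad :: "'a set \<Rightarrow> ('a \<Rightarrow> 'a \<Rightarrow> bool) \<Rightarrow> ('a \<Rightarrow> int) \<Rightarrow> 'a \<Rightarrow> int" where
  "form_grad V C d i = (\<Sum>j\<in>V. gram C i j * d j)"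

definition dynkin_vertex :: "'a set \<Rightarrow> ('a \<Rightarrow> 'a \<Rightarrow> bool) \<Rightarrow> 'a \<Rightarrow> bool" where
  "dynkin_vertex V C t \<longleftrightarrow> t \<in> V \<and>
     (\<exists>d. (\<forall>x. x \<notin> V \<longrightarrow> d x = 0) \<and> (\<exists>x\<in>V. d x \<noteq> 0) \<and>
        0 \<le> form_grad V C d t \<and> form_grad V C d t \<le> 2 \<and>
        (\<forall>j\<in>V. j \<noteq> t \<longrightarrow> form_grad V C d j = 0))"

lemma form_grad_uminus: "form_grad V C (\<lambda>k. - d k) i = - form_grad V C d i"
  by (simp add: form_grad_def sum_negf)

lemma dynkin_vertexI:
  assumes "t \<in> V" "\<forall>x. x \<notin> V \<longrightarrow> d x = 0" "\<exists>x\<in>V. d x \<noteq> 0"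
    and "\<forall>j\<in>V. j \<noteq> t \<longrightarrow> form_grad V C d j = 0" "\<bar>form_grad V C d t\<bar> \<le> 2"
  shows "dynkin_vertex V C t"
proof (cases "0 \<le> form_grad V C d t")
  case True
  then show ?thesis using assms unfolding dynkin_vertex_def by (intro conjI exI[of _ d]) auto
next
  case False
  then show ?thesis using assms unfolding dynkin_vertex_def
    by (intro conjI exI[of _ "\<lambda>k. - d k"]) (auto simp: form_grad_uminus)
qed

lemma comparable_by_commute: "comparable_by r x y \<longleftrightarrow> comparable_by r y x"
  by (auto simp: comparable_by_def)

lemma gram_comparable_by_commute: "gram (comparable_by r) i j = gram (comparable_by r) j i"
  by (auto simp: gram_def comparable_by_def)

lemma sum_gram_cross:
  assumes "finite B" "j \<notin> B" "R \<subseteq> B" and "\<forall>k\<in>B. C j k \<longleftrightarrow> j \<in> A \<and> k \<in> R"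
  shows "(\<Sum>k\<in>B. gram C j k * x k) = of_bool (j \<in> A) * sum x R"
proof -
  have "(\<Sum>k\<in>B. gram C j k * x k) = (\<Sum>k\<in>B. of_bool (j \<in> A) * (of_bool (k \<in> R) * x k))"
    using assms(2,4) by (intro sum.cong) (auto simp: gram_def)
  also have "\<dots> = of_bool (j \<in> A) * (\<Sum>k\<in>B. of_bool (k \<in> R) * x k)"
    by (simp only: sum_distrib_left)
  also have "(\<Sum>k\<in>B. of_bool (k \<in> R) * x k) = sum x R"
    using assms(1,3) by (subst sum_of_bool_mult_eq) (simp_all add: Int_absorb1)
  finally show ?thesis .
qed

lemma sum_mult_add_point:
  fixes f x :: "'a \<Rightarrow> 'b::comm_ring_1"
  assumes "finite B" "v \<in> B"
  shows "(\<Sum>k\<in>B. f k * (x k + of_bool (k = v) * c)) = (\<Sum>k\<in>B. f k * x k) + f v * c"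
  using assms by (simp add: distrib_left sum.distrib mult.left_commute[of "f _"])

section \<open>Flipping one edge of a forest\<close>

locale forest_edge_flip =
  fixes V :: "'a set" and E r :: "'a \<Rightarrow> 'a \<Rightarrow> bool" and u w :: 'a
  assumes finite_V: "finite V" and graph: "graph_on V E" and acyclic: "acyclic_graph V E"
    and orientation: "acyclic_orientation E r" and edge: "r u w"
begin

abbreviation "W \<equiv> cut_component E u w"
abbreviation "r' \<equiv> flip_edge r u w"

lemma E_iff: "E x y \<longleftrightarrow> r x y \<or> r y x"
  using orientation by (simp add: acyclic_orientation_def)

lemma rtranclp_antisym: "r\<^sup>*\<^sup>* x y \<Longrightarrow> r\<^sup>*\<^sup>* y x \<Longrightarrow> x = y"
  using orientation by (simp add: acyclic_orientation_def)

lemma u_in_V: "u \<in> V" and w_in_V: "w \<in> V" and u_neq_w: "u \<noteq> w"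
  using graph edge by (auto simp: graph_on_def E_iff)

lemma not_edge_w_u: "\<not> r w u"
  using rtranclp_antisym[of u w] edge u_neq_w by blast

lemma u_notin_W: "u \<notin> W"
  using notin_cut_component[OF graph acyclic] edge by (simp add: E_iff)

lemma W_subset_V: "W \<subseteq> V"
  using cut_component_subset[OF graph w_in_V] .

lemma W_closed: "r x y \<Longrightarrow> x \<in> W \<Longrightarrow> y \<in> W"
  using cut_component_leaving_edge[of E x y u w] u_notin_W not_edge_w_u
  by (auto simp: E_iff doubleton_eq_iff)

lemma W_entry: "r x y \<Longrightarrow> x \<notin> W \<Longrightarrow> y \<in> W \<Longrightarrow> x = u \<and> y = w"
  using cut_component_leaving_edge[of E y x u w] by (auto simp: E_iff doubleton_eq_iff)

lemma flip_compl_W_closed: "r' x y \<Longrightarrow> x \<notin> W \<Longrightarrow> y \<notin> W"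
  using W_entry by (auto simp: flip_edge_def)

lemma flip_compl_W_entry: "r' x y \<Longrightarrow> x \<in> W \<Longrightarrow> y \<notin> W \<Longrightarrow> x = w \<and> y = u"
  using W_closed by (auto simp: flip_edge_def)

lemma rtranclp_flip_same_side:
  assumes "a \<in> W \<longleftrightarrow> b \<in> W"
  shows "r'\<^sup>*\<^sup>* a b \<longleftrightarrow> r\<^sup>*\<^sup>* a b"
proof (cases "a \<in> W")
  case True
  have "(\<lambda>x y. r' x y \<and> x \<in> W \<and> y \<in> W) = (\<lambda>x y. r x y \<and> x \<in> W \<and> y \<in> W)"
    using u_notin_W by (auto simp: flip_edge_def fun_eq_iff)
  then show ?thesis
    using True assms W_closed flip_compl_W_closed
      rtranclp_closed_iff_restrict[of r W a b] rtranclp_closed_iff_restrict_compl[of r' "- W" b a]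
    by auto
next
  case False
  have "(\<lambda>x y. r' x y \<and> x \<notin> W \<and> y \<notin> W) = (\<lambda>x y. r x y \<and> x \<notin> W \<and> y \<notin> W)"
    by (auto simp: flip_edge_def fun_eq_iff)
  then show ?thesis
    using False assms W_closed flip_compl_W_closed
      rtranclp_closed_iff_restrict_compl[of r W b a] rtranclp_closed_iff_restrict[of r' "- W" a b]
    by auto
qed

lemma rtranclp_into_W:
  assumes "a \<notin> W" "b \<in> W"
  shows "r\<^sup>*\<^sup>* a b \<longleftrightarrow> r\<^sup>*\<^sup>* a u \<and> r\<^sup>*\<^sup>* w b"
proof
  show "r\<^sup>*\<^sup>* a b \<Longrightarrow> r\<^sup>*\<^sup>* a u \<and> r\<^sup>*\<^sup>* w b"
    using rtranclp_through_single_entry[of r W u w a b] W_entry assms by blast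
  show "r\<^sup>*\<^sup>* a u \<and> r\<^sup>*\<^sup>* w b \<Longrightarrow> r\<^sup>*\<^sup>* a b"
    using edge by (blast intro: rtranclp_trans rtranclp.rtrancl_into_rtrancl)
qed

lemma not_rtranclp_out_of_W: "a \<in> W \<Longrightarrow> b \<notin> W \<Longrightarrow> \<not> r\<^sup>*\<^sup>* a b"
  using rtranclp_closed_iff_restrict[of r W a b] W_closed by blast

lemma rtranclp_flip_out_of_W:
  assumes "a \<notin> W" "b \<in> W"
  shows "r'\<^sup>*\<^sup>* b a \<longleftrightarrow> r\<^sup>*\<^sup>* b w \<and> r\<^sup>*\<^sup>* u a"
proof -
  have "r'\<^sup>*\<^sup>* b a \<longleftrightarrow> r'\<^sup>*\<^sup>* b w \<and> r'\<^sup>*\<^sup>* u a"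
  proof
    show "r'\<^sup>*\<^sup>* b a \<Longrightarrow> r'\<^sup>*\<^sup>* b w \<and> r'\<^sup>*\<^sup>* u a"
      using rtranclp_through_single_entry[of r' "- W" w u b a] flip_compl_W_entry assms by blast
    have "r' w u" by (simp add: flip_edge_def)
    then show "r'\<^sup>*\<^sup>* b w \<and> r'\<^sup>*\<^sup>* u a \<Longrightarrow> r'\<^sup>*\<^sup>* b a"
      by (blast intro: rtranclp_trans rtranclp.rtrancl_into_rtrancl)
  qed
  then show ?thesis
    using rtranclp_flip_same_side[of b w] rtranclp_flip_same_side[of u a] assms u_notin_W by simp
qed

lemma not_rtranclp_flip_into_W: "a \<notin> W \<Longrightarrow> b \<in> W \<Longrightarrow> \<not> r'\<^sup>*\<^sup>* a b"
  using rtranclp_closed_iff_restrict[of r' "- W" a b] flip_compl_W_closed by blast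

lemma acyclic_orientation_flip: "acyclic_orientation E r'"
  unfolding acyclic_orientation_def
proof (intro conjI allI impI)
  fix x y
  show "E x y \<longleftrightarrow> r' x y \<or> r' y x"
    using edge by (auto simp: E_iff flip_edge_def)
next
  fix x y
  assume "r'\<^sup>*\<^sup>* x y" "r'\<^sup>*\<^sup>* y x"
  moreover from this have "x \<in> W \<longleftrightarrow> y \<in> W"
    using not_rtranclp_flip_into_W by blast
  ultimately show "x = y"
    using rtranclp_flip_same_side rtranclp_antisym by metis
qed

definition below_u :: "'a set" where "below_u = {a \<in> V - W. r\<^sup>*\<^sup>* a u}"
definition above_u :: "'a set" where "above_u = {a \<in> V - W. r\<^sup>*\<^sup>* u a}"
definition above_w :: "'a set" where "above_w = {b \<in> W. r\<^sup>*\<^sup>* w b}"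
definition below_w :: "'a set" where "below_w = {b \<in> W. r\<^sup>*\<^sup>* b w}"

lemma u_in_below_u: "u \<in> below_u" and u_in_above_u: "u \<in> above_u"
  and w_in_above_w: "w \<in> above_w" and w_in_below_w: "w \<in> below_w"
  using u_in_V u_notin_W by (auto simp: below_u_def above_u_def above_w_def below_w_def)

lemma below_u_subset: "below_u \<subseteq> V - W" and above_u_subset: "above_u \<subseteq> V - W"
  and above_w_subset: "above_w \<subseteq> W" and below_w_subset: "below_w \<subseteq> W"
  by (auto simp: below_u_def above_u_def above_w_def below_w_def)

abbreviation "C \<equiv> comparable_by r"
abbreviation "C' \<equiv> comparable_by r'"

lemma comparable_across:
  assumes "a \<in> V - W" "b \<in> W"
  shows "C a b \<longleftrightarrow> a \<in> below_u \<and> b \<in> above_w"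
  using assms rtranclp_into_W not_rtranclp_out_of_W
  by (auto simp: comparable_by_def below_u_def above_w_def)

lemma comparable_flip_across:
  assumes "a \<in> V - W" "b \<in> W"
  shows "C' a b \<longleftrightarrow> a \<in> above_u \<and> b \<in> below_w"
  using assms rtranclp_flip_out_of_W not_rtranclp_flip_into_W
  by (auto simp: comparable_by_def above_u_def below_w_def)

lemma gram_flip_same_side: "a \<in> W \<longleftrightarrow> b \<in> W \<Longrightarrow> gram C' a b = gram C a b"
  using rtranclp_flip_same_side by (simp add: gram_def comparable_by_def)

lemma gram_u: "a \<in> V - W \<Longrightarrow> gram C a u = of_bool (a \<in> below_u) + of_bool (a \<in> above_u)"
  using rtranclp_antisym[of a u] by (auto simp: gram_def comparable_by_def below_u_def above_u_def)

lemma gram_w: "b \<in> W \<Longrightarrow> gram C b w = of_bool (b \<in> above_w) + of_bool (b \<in> below_w)"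
  using rtranclp_antisym[of b w] by (auto simp: gram_def comparable_by_def above_w_def below_w_def)

lemma finite_W: "finite W"
  using W_subset_V finite_V by (rule finite_subset)

lemma form_grad_split:
  "form_grad V C' x j = (\<Sum>k\<in>V - W. gram C' j k * x k) + (\<Sum>k\<in>W. gram C' j k * x k)"
  "form_grad V C x j = (\<Sum>k\<in>V - W. gram C j k * x k) + (\<Sum>k\<in>W. gram C j k * x k)"
  using sum.subset_diff[OF W_subset_V finite_V] by (simp_all add: form_grad_def)

lemma form_grad_outside_W:
  assumes "j \<in> V - W"
  shows "form_grad V C x j = (\<Sum>k\<in>V - W. gram C j k * x k) + of_bool (j \<in> below_u) * sum x above_w"
    and "form_grad V C' x j = (\<Sum>k\<in>V - W. gram C j k * x k) + of_bool (j \<in> above_u) * sum x below_w"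
proof -
  have "(\<Sum>k\<in>W. gram C j k * x k) = of_bool (j \<in> below_u) * sum x above_w"
    by (rule sum_gram_cross) (use assms finite_W above_w_subset comparable_across in auto)
  moreover have "(\<Sum>k\<in>W. gram C' j k * x k) = of_bool (j \<in> above_u) * sum x below_w"
    by (rule sum_gram_cross) (use assms finite_W below_w_subset comparable_flip_across in auto)
  moreover have "(\<Sum>k\<in>V - W. gram C' j k * x k) = (\<Sum>k\<in>V - W. gram C j k * x k)"
    using assms gram_flip_same_side by (intro sum.cong) auto
  ultimately show "form_grad V C x j = (\<Sum>k\<in>V - W. gram C j k * x k) + of_bool (j \<in> below_u) * sum x above_w"
    "form_grad V C' x j = (\<Sum>k\<in>V - W. gram C j k * x k) + of_bool (j \<in> above_u) * sum x below_w"
    by (simp_all add: form_grad_split)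
qed

lemma form_grad_in_W:
  assumes "j \<in> W"
  shows "form_grad V C x j = (\<Sum>k\<in>W. gram C j k * x k) + of_bool (j \<in> above_w) * sum x below_u"
    and "form_grad V C' x j = (\<Sum>k\<in>W. gram C j k * x k) + of_bool (j \<in> below_w) * sum x above_u"
proof -
  have cross: "C j k \<longleftrightarrow> j \<in> above_w \<and> k \<in> below_u" "C' j k \<longleftrightarrow> j \<in> below_w \<and> k \<in> above_u"
    if "k \<in> V - W" for k
    using comparable_across[OF that assms] comparable_flip_across[OF that assms]
      comparable_by_commute[of r j k] comparable_by_commute[of r' j k] by auto
  have "(\<Sum>k\<in>V - W. gram C j k * x k) = of_bool (j \<in> above_w) * sum x below_u"
    by (rule sum_gram_cross) (use assms finite_V below_u_subset cross in auto)
  moreover have "(\<Sum>k\<in>V - W. gram C' j k * x k) = of_bool (j \<in> below_w) * sum x above_u"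
    by (rule sum_gram_cross) (use assms finite_V above_u_subset cross in auto)
  moreover have "(\<Sum>k\<in>W. gram C' j k * x k) = (\<Sum>k\<in>W. gram C j k * x k)"
    using assms gram_flip_same_side by (intro sum.cong) auto
  ultimately show "form_grad V C x j = (\<Sum>k\<in>W. gram C j k * x k) + of_bool (j \<in> above_w) * sum x below_u"
    "form_grad V C' x j = (\<Sum>k\<in>W. gram C j k * x k) + of_bool (j \<in> below_w) * sum x above_u"
    by (simp_all add: form_grad_split)
qed

lemma sum_gram_w:
  "(\<Sum>k\<in>W. gram C w k * x k) = sum x above_w + sum x below_w"
proof -
  have "(\<Sum>k\<in>W. gram C w k * x k) = (\<Sum>k\<in>W. of_bool (k \<in> above_w) * x k + of_bool (k \<in> below_w) * x k)"
    using gram_w gram_comparable_by_commute[of r w] by (intro sum.cong) (auto simp: algebra_simps)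
  also have "\<dots> = sum x above_w + sum x below_w"
    using finite_W above_w_subset below_w_subset by (simp add: sum.distrib Int_absorb1)
  finally show ?thesis .
qed

lemma sum_gram_u:
  "(\<Sum>k\<in>V - W. gram C u k * x k) = sum x below_u + sum x above_u"
proof -
  have "(\<Sum>k\<in>V - W. gram C u k * x k) =
      (\<Sum>k\<in>V - W. of_bool (k \<in> below_u) * x k + of_bool (k \<in> above_u) * x k)"
    using gram_u gram_comparable_by_commute[of r u] by (intro sum.cong) (auto simp: algebra_simps)
  also have "\<dots> = sum x below_u + sum x above_u"
    using finite_V below_u_subset above_u_subset by (simp add: sum.distrib Int_absorb1)
  finally show ?thesis .
qed

definition flip_vector :: "('a \<Rightarrow> int) \<Rightarrow> 'a \<Rightarrow> int" where
  "flip_vector d k = d k + of_bool (k = u) * sum d above_w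
     - of_bool (k = w) * (sum d above_w + sum d below_w)"

lemma flip_vector_outside_W: "k \<in> V - W \<Longrightarrow> flip_vector d k = d k + of_bool (k = u) * sum d above_w"
  by (auto simp: flip_vector_def)

lemma flip_vector_in_W:
  "k \<in> W \<Longrightarrow> flip_vector d k = d k + of_bool (k = w) * - (sum d above_w + sum d below_w)"
  using u_notin_W by (auto simp: flip_vector_def)

lemma form_grad_flip_vector_outside_W:
  assumes "j \<in> V - W"
  shows "form_grad V C' (flip_vector d) j = form_grad V C d j"
proof -
  have "(\<Sum>k\<in>V - W. gram C j k * flip_vector d k) =
      (\<Sum>k\<in>V - W. gram C j k * d k) + gram C j u * sum d above_w"
    using u_in_V u_notin_W finite_V by (simp add: flip_vector_outside_W sum_mult_add_point)
  moreover have "sum (flip_vector d) below_w = - sum d above_w"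
    using w_in_below_w below_w_subset finite_W finite_subset[OF below_w_subset finite_W]
    by (simp add: flip_vector_in_W sum_gram_w sum.distrib subset_eq)
  ultimately show ?thesis
    using assms gram_u by (simp add: form_grad_outside_W algebra_simps)
qed

lemma form_grad_flip_vector_in_W:
  assumes "j \<in> W"
  shows "form_grad V C' (flip_vector d) j = form_grad V C d j
    - of_bool (j \<in> above_w) * form_grad V C d w
    + of_bool (j \<in> below_w) * (form_grad V C d u - form_grad V C d w)"
proof -
  have "(\<Sum>k\<in>W. gram C j k * flip_vector d k) =
      (\<Sum>k\<in>W. gram C j k * d k) + gram C j w * - (sum d above_w + sum d below_w)"
    using finite_W by (simp add: flip_vector_in_W sum_mult_add_point sum_gram_w)
  moreover have "sum (flip_vector d) above_u = sum d above_u + sum d above_w"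
    using u_in_above_u above_u_subset finite_subset[OF above_u_subset] finite_V
    by (simp add: flip_vector_outside_W sum.distrib subset_eq)
  moreover have "form_grad V C d w = sum d above_w + sum d below_w + sum d below_u"
    using w_in_above_w by (simp add: form_grad_in_W sum_gram_w)
  moreover have "form_grad V C d u = sum d below_u + sum d above_u + sum d above_w"
    using u_in_V u_notin_W u_in_below_u by (simp add: form_grad_outside_W sum_gram_u)
  ultimately show ?thesis
    using assms gram_w by (simp add: form_grad_in_W algebra_simps)
qed

lemma flip_vector_eq_0D:
  assumes "\<forall>k\<in>V. flip_vector d k = 0"
  shows "\<forall>k\<in>V. d k = 0"
proof -
  have off_uw: "d k = 0" if "k \<in> V" "k \<noteq> u" "k \<noteq> w" for k
    using assms that by (auto simp: flip_vector_def)
  have "sum d above_w + sum d below_w = (\<Sum>j\<in>W. gram C w j * d j)"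
    by (rule sum_gram_w[symmetric])
  also have "\<dots> = gram C w w * d w + (\<Sum>j\<in>W - {w}. gram C w j * d j)"
    using finite_W by (rule sum.remove) simp
  also have "(\<Sum>j\<in>W - {w}. gram C w j * d j) = 0"
    using off_uw W_subset_V u_notin_W by (intro sum.neutral) auto
  finally have "flip_vector d w = - d w"
    by (simp add: flip_vector_in_W gram_def)
  then have "d w = 0"
    using assms w_in_V by simp
  then have "\<forall>k\<in>W. d k = 0"
    using off_uw W_subset_V u_notin_W by blast
  then have "sum d above_w = 0"
    using above_w_subset by (auto intro: sum.neutral)
  then have "d u = 0"
    using assms flip_vector_outside_W[of u d] u_in_V u_notin_W by simp
  then show ?thesis
    using off_uw \<open>d w = 0\<close> by blast
qed

lemma dynkin_vertex_flip:
  assumes "t \<noteq> u" and leaf: "card {s \<in> V. E t s} \<le> 1" and "dynkin_vertex V C t"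
  shows "dynkin_vertex V C' t"
proof -
  obtain d where "t \<in> V" and support: "\<forall>x. x \<notin> V \<longrightarrow> d x = 0" and nonzero: "\<exists>x\<in>V. d x \<noteq> 0"
    and "0 \<le> form_grad V C d t" "form_grad V C d t \<le> 2"
    and grad_zero: "\<forall>j\<in>V. j \<noteq> t \<longrightarrow> form_grad V C d j = 0"
    using assms(3) unfolding dynkin_vertex_def by blast
  define g where "g = form_grad V C d"
  have "g u = 0" using grad_zero u_in_V assms(1) by (simp add: g_def)
  obtain s :: int where "\<bar>s\<bar> = 1" and grad_flip: "\<forall>j\<in>V. form_grad V C' (flip_vector d) j = s * g j"
  proof (cases "t = w")
    case True
    then have "W = {w}"
      using cut_component_of_leaf[OF finite_V graph _ leaf[unfolded True]] edge E_iff[of w u] by blast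
    then have "above_w = {w}" "below_w = {w}"
      using w_in_above_w above_w_subset w_in_below_w below_w_subset by blast+
    have "form_grad V C' (flip_vector d) j = - g j" if "j \<in> V" for j
    proof (cases "j \<in> W")
      case True
      then show ?thesis
        using \<open>W = {w}\<close> \<open>above_w = {w}\<close> \<open>below_w = {w}\<close> \<open>g u = 0\<close>
        by (simp add: form_grad_flip_vector_in_W g_def)
    next
      case False
      then show ?thesis
        using that grad_zero \<open>t = w\<close> by (auto simp: form_grad_flip_vector_outside_W g_def)
    qed
    then show ?thesis by (intro that[of "-1"]) auto
  next
    case False
    then have "g w = 0" using grad_zero w_in_V by (simp add: g_def)
    then have "form_grad V C' (flip_vector d) j = g j" if "j \<in> V" for j
      using that \<open>g u = 0\<close>
      by (cases "j \<in> W") (simp_all add: form_grad_flip_vector_in_W form_grad_flip_vector_outside_W g_def)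
    then show ?thesis by (intro that[of 1]) auto
  qed
  show ?thesis
  proof (rule dynkin_vertexI)
    show "\<forall>x. x \<notin> V \<longrightarrow> flip_vector d x = 0"
      using support u_in_V w_in_V by (auto simp: flip_vector_def)
    show "\<exists>x\<in>V. flip_vector d x \<noteq> 0"
      using flip_vector_eq_0D nonzero by blast
    show "\<forall>j\<in>V. j \<noteq> t \<longrightarrow> form_grad V C' (flip_vector d) j = 0"
      using grad_flip grad_zero by (simp add: g_def)
    show "\<bar>form_grad V C' (flip_vector d) t\<bar> \<le> 2"
      using grad_flip \<open>t \<in> V\<close> \<open>\<bar>s\<bar> = 1\<close> \<open>0 \<le> form_grad V C d t\<close> \<open>form_grad V C d t \<le> 2\<close>
      by (simp add: g_def abs_mult)
  qed (rule \<open>t \<in> V\<close>)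
qed

end

text \<open>Reversing an orientation does not change comparability, so the case where \<open>t\<close> is the tail
  of the flipped edge reduces to the case where it is the head.\<close>
lemma dynkin_vertex_flip_edge:
  assumes "finite V" "graph_on V E" "acyclic_graph V E" "acyclic_orientation E r" "r u w"
    and leaf: "card {s \<in> V. E t s} \<le> 1" and dynkin: "dynkin_vertex V (comparable_by r) t"
  shows "dynkin_vertex V (comparable_by (flip_edge r u w)) t"
proof (cases "t = u")
  case False
  interpret forest_edge_flip V E r u w
    using assms by unfold_locales
  show ?thesis
    using dynkin_vertex_flip[OF False leaf dynkin] .
next
  case True
  interpret converse: forest_edge_flip V E "r\<inverse>\<inverse>" w u
    using assms acyclic_orientation_conversep by unfold_locales auto
  have "t \<noteq> w"
    using True converse.u_neq_w by simp
  then show ?thesis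
    using converse.dynkin_vertex_flip leaf dynkin by (simp add: flip_edge_conversep)
qed

lemma acyclic_orientation_eqI:
  assumes "graph_on V E" "acyclic_orientation E r" "acyclic_orientation E r1"
    and "\<And>x y. r x y \<Longrightarrow> r1 x y"
  shows "r = r1"
proof (intro ext iffI)
  fix x y
  assume "r1 x y"
  moreover have "\<not> r y x"
  proof
    assume "r y x"
    then have "r1 y x"
      using assms(4) by blast
    then have "x = y"
      using \<open>r1 x y\<close> assms(3) unfolding acyclic_orientation_def by (meson r_into_rtranclp)
    then show False
      using \<open>r y x\<close> assms(1,2) by (auto simp: acyclic_orientation_def graph_on_def)
  qed
  ultimately show "r x y"
    using assms(2,3) by (auto simp: acyclic_orientation_def)
qed (use assms(4) in blast)

theorem dynkin_vertex_orientation_independent: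
  assumes "finite V" "graph_on V E" "acyclic_graph V E" and leaf: "card {s \<in> V. E t s} \<le> 1"
    and "acyclic_orientation E r1"
  shows "acyclic_orientation E r \<Longrightarrow> dynkin_vertex V (comparable_by r) t \<Longrightarrow>
    dynkin_vertex V (comparable_by r1) t"
proof (induction "card {(x, y). r x y \<and> \<not> r1 x y}" arbitrary: r rule: less_induct)
  case less
  show ?case
  proof (cases "\<exists>x y. r x y \<and> \<not> r1 x y")
    case False
    then have "r = r1"
      using acyclic_orientation_eqI[OF assms(2) less.prems(1) assms(5)] by blast
    then show ?thesis
      using less.prems(2) by simp
  next
    case True
    then obtain u w where "r u w" "\<not> r1 u w" by blast
    interpret forest_edge_flip V E r u w
      using assms(1-3) less.prems(1) \<open>r u w\<close> by unfold_locales
    have "E u w"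
      using edge E_iff by blast
    then have "r1 w u"
      using assms(5) \<open>\<not> r1 u w\<close> unfolding acyclic_orientation_def by blast
    then have "{(x, y). r' x y \<and> \<not> r1 x y} \<subset> {(x, y). r x y \<and> \<not> r1 x y}"
      using \<open>r u w\<close> \<open>\<not> r1 u w\<close> by (auto simp: flip_edge_def)
    moreover have "{(x, y). r x y \<and> \<not> r1 x y} \<subseteq> V \<times> V"
      using graph E_iff unfolding graph_on_def by blast
    then have "finite {(x, y). r x y \<and> \<not> r1 x y}"
      using finite_V by (simp add: finite_subset)
    ultimately have "card {(x, y). r' x y \<and> \<not> r1 x y} < card {(x, y). r x y \<and> \<not> r1 x y}"
      by (simp add: psubset_card_mono)
    moreover have "dynkin_vertex V (comparable_by r') t"
      using dynkin_vertex_flip_edge[OF assms(1-3) less.prems(1) \<open>r u w\<close> leaf less.prems(2)] .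
    ultimately show ?thesis
      using less.hyps acyclic_orientation_flip by blast
  qed
qed

section \<open>Posets and their Hasse diagrams\<close>

lemma rtranclp_covers_imp_le:
  assumes "poset_on V le" "(covers V le)\<^sup>*\<^sup>* x y"
  shows "x = y \<or> (x \<in> V \<and> y \<in> V \<and> le x y)"
  using assms(2)
proof (induction rule: rtranclp_induct)
  case (step y z)
  then have "y \<in> V" "z \<in> V" "le y z"
    by (auto simp: covers_def less_in_def)
  with step.IH show ?case
    using assms(1) unfolding poset_on_def by blast
qed simp

lemma le_imp_rtranclp_covers:
  assumes "finite V" and po: "poset_on V le"
  shows "x \<in> V \<Longrightarrow> y \<in> V \<Longrightarrow> le x y \<Longrightarrow> (covers V le)\<^sup>*\<^sup>* x y"
proof (induction "card {z \<in> V. le x z \<and> le z y}" arbitrary: x y rule: less_induct)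
  case less
  have refl: "le a a" if "a \<in> V" for a
    using po that unfolding poset_on_def by blast
  have antisym: "a = b" if "a \<in> V" "b \<in> V" "le a b" "le b a" for a b
    using po that unfolding poset_on_def by blast
  have trans: "le a c" if "a \<in> V" "b \<in> V" "c \<in> V" "le a b" "le b c" for a b c
    using po that unfolding poset_on_def by blast
  show ?case
  proof (cases "x = y \<or> covers V le x y")
    case True
    then show ?thesis by auto
  next
    case False
    then obtain z where z: "z \<in> V" "le x z" "x \<noteq> z" "le z y" "z \<noteq> y"
      using less.prems by (auto simp: covers_def less_in_def)
    let ?I = "{z' \<in> V. le x z' \<and> le z' y}"
    have "{z' \<in> V. le x z' \<and> le z' z} \<subseteq> ?I" "{z' \<in> V. le z z' \<and> le z' y} \<subseteq> ?I"
      using trans z less.prems by blast+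
    moreover have "y \<in> ?I - {z' \<in> V. le x z' \<and> le z' z}" "x \<in> ?I - {z' \<in> V. le z z' \<and> le z' y}"
      using refl antisym z less.prems by blast+
    ultimately have "card {z' \<in> V. le x z' \<and> le z' z} < card ?I"
      "card {z' \<in> V. le z z' \<and> le z' y} < card ?I"
      using \<open>finite V\<close> by (auto intro!: psubset_card_mono)
    then have "(covers V le)\<^sup>*\<^sup>* x z" "(covers V le)\<^sup>*\<^sup>* z y"
      using less.hyps less.prems z by blast+
    then show ?thesis by (rule rtranclp_trans)
  qed
qed

lemma rtranclp_covers_iff_le:
  assumes "finite V" "poset_on V le" "x \<in> V" "y \<in> V"
  shows "(covers V le)\<^sup>*\<^sup>* x y \<longleftrightarrow> le x y"
  using le_imp_rtranclp_covers[OF assms(1,2)] rtranclp_covers_imp_le[OF assms(2)] assms(2-4)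
  unfolding poset_on_def by blast

lemma acyclic_orientation_covers:
  assumes "poset_on V le"
  shows "acyclic_orientation (hasse_edge V le) (covers V le)"
proof -
  have "x = y" if "(covers V le)\<^sup>*\<^sup>* x y" "(covers V le)\<^sup>*\<^sup>* y x" for x y
    using rtranclp_covers_imp_le[OF assms that(1)] rtranclp_covers_imp_le[OF assms that(2)] assms
    unfolding poset_on_def by blast
  then show ?thesis
    by (simp add: acyclic_orientation_def hasse_edge_def)
qed

lemma dfS_eq_form_grad:
  assumes "finite V" "poset_on V le" "m \<in> V"
  shows "dfS V le x m = form_grad V (comparable_by (covers V le)) x m"
proof -
  let ?C = "comparable_by (covers V le)"
  have "form_grad V ?C x m = gram ?C m m * x m + (\<Sum>j\<in>V - {m}. gram ?C m j * x j)"
    unfolding form_grad_def using assms(1,3) by (rule sum.remove)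
  also have "(\<Sum>j\<in>V - {m}. gram ?C m j * x j) = sum x {j \<in> V. j \<noteq> m \<and> comparable_in le j m}"
    using assms rtranclp_covers_iff_le
    by (intro sum.mono_neutral_cong_right) (auto simp: gram_def comparable_by_def comparable_in_def rtranclp_covers_iff_le[OF assms(1,2)])
  finally show ?thesis
    by (simp add: dfS_def gram_def)
qed

lemma dynkin_point_iff_dynkin_vertex:
  assumes "finite V" "poset_on V le"
  shows "dynkin_point V le t \<longleftrightarrow> dynkin_vertex V (comparable_by (covers V le)) t"
  unfolding dynkin_point_def dynkin_vertex_def
  by (auto simp: dfS_eq_form_grad[OF assms] cong: conj_cong)

theorem lemma7:
  fixes V :: "'a set" and le le' :: "'a \<Rightarrow> 'a \<Rightarrow> bool" and t :: 'a
  assumes "finite V"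
    and "poset_on V le"
    and "hasse_acyclic V le"
    and "terminal_point V le t"
    and "dynkin_point V le t"
    and "poset_on V le'"
    and "\<forall>x\<in>V. \<forall>y\<in>V. hasse_edge V le' x y \<longleftrightarrow> hasse_edge V le x y"
  shows "dynkin_point V le' t"
proof -
  let ?E = "hasse_edge V le"
  have same_hasse: "hasse_edge V le' = ?E"
  proof (intro ext)
    fix x y
    show "hasse_edge V le' x y = ?E x y"
      using assms(7) by (cases "x \<in> V \<and> y \<in> V") (auto simp: hasse_edge_def covers_def)
  qed
  have graph: "graph_on V ?E"
    by (auto simp: graph_on_def hasse_edge_def covers_def less_in_def)
  have acyclic: "acyclic_graph V ?E"
    using assms(3) by (simp add: hasse_acyclic_def acyclic_graph_def)
  have leaf: "card {s \<in> V. ?E t s} \<le> 1"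
    using assms(4) by (simp add: terminal_point_def hasse_degree_def)
  have "dynkin_vertex V (comparable_by (covers V le)) t"
    using assms(5) dynkin_point_iff_dynkin_vertex[OF assms(1,2)] by simp
  then have "dynkin_vertex V (comparable_by (covers V le')) t"
    by (rule dynkin_vertex_orientation_independent[OF assms(1) graph acyclic leaf
          acyclic_orientation_covers[OF assms(6), unfolded same_hasse]
          acyclic_orientation_covers[OF assms(2)]])
  then show ?thesis
    using dynkin_point_iff_dynkin_vertex[OF assms(1,6)] by simp
qed

end
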